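(* Let $K$ be a field, $\nu$ a valuation on $K[x]$, and $\mathbf{Q}\subseteq K[x]$ a set of nonconstant monic polynomials with the following properties: (1) $\nu_Q$ is a valuation on $K[x]$ for every $Q\in\mathbf{Q}$; (2) for every finite nonempty subset $\mathcal{F}\subseteq\mathbf{Q}$ there exists $Q\in\mathcal{F}$ such that $\nu_Q(Q')=\nu(Q')$ for every $Q'\in\mathcal{F}$; (3) for every $p\in K[x]$ there exist $a_1,\ldots,a_r\in K$ and $\lambda_1,\ldots,\lambda_r\in\mathbb{N}^{\mathbf{Q}}$ such that $p=\sum_{i=1}^r a_i\mathbf{Q}^{\lambda_i}$ with $\nu(a_i\mathbf{Q}^{\lambda_i})\geq\nu(p)$ for every $i$, and $\deg(Q)\leq\deg(p)$ for every $Q\in\mathbf{Q}$ with $\lambda_i(Q)\neq 0$ for some $i$. Then $\mathbf{Q}$ is a complete set for $\nu$.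
   Context: A valuation on a commutative ring $R$ is a map $\nu:R\to\Gamma\cup\{\infty\}$, $\Gamma$ an ordered abelian group, with $\nu(ab)=\nu(a)+\nu(b)$, $\nu(a+b)\geq\min\{\nu(a),\nu(b)\}$, $\nu(1)=0$, $\nu(0)=\infty$ (nonzero elements may have value $\infty$). For a nonconstant monic $q\in K[x]$ and $f\in K[x]$, the $q$-expansion of $f$ is the unique expression $f=f_0+f_1q+\cdots+f_nq^n$ with each $f_i=0$ or $\deg(f_i)<\deg(q)$; the $q$-truncation of $\nu$ is $\nu_q(f):=\min_{0\leq i\leq n}\nu(f_iq^i)$. A set $\mathbf{Q}$ of nonconstant monic polynomials in $K[x]$ is a complete set for $\nu$ if for every nonconstant $p\in K[x]$ there exists $q\in\mathbf{Q}$ with $\deg(q)\leq\deg(p)$ and $\nu(p)=\nu_q(p)$. $\mathbb{N}^{\mathbf{Q}}$ denotes the set of maps $\lambda:\mathbf{Q}\to\mathbb{N}$ with $\lambda(q)=0$ for all but finitely many $q$, and $\mathbf{Q}^\lambda:=\prod_{q\in\mathbf{Q}}q^{\lambda(q)}$. *)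

theory Defs
  imports "HOL-Computational_Algebra.Polynomial"
begin

text \<open>Values in \<Gamma> \<union> {\<infinity>}: an element of type 'g option, where None represents \<infinity>
  and Some g represents g \<in> \<Gamma> (with \<Gamma> a linearly ordered abelian group).\<close>

fun vle :: "'g::linordered_ab_group_add option \<Rightarrow> 'g option \<Rightarrow> bool" where
  "vle _ None = True"
| "vle None (Some _) = False"
| "vle (Some a) (Some b) = (a \<le> b)"

fun vadd :: "'g::linordered_ab_group_add option \<Rightarrow> 'g option \<Rightarrow> 'g option" where
  "vadd (Some a) (Some b) = Some (a + b)"
| "vadd _ _ = None"

fun vmin :: "'g::linordered_ab_group_add option \<Rightarrow> 'g option \<Rightarrow> 'g option" where
  "vmin None y = y"
| "vmin x None = x"
| "vmin (Some a) (Some b) = Some (min a b)"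

definition is_valuation :: "('a::field poly \<Rightarrow> 'g::linordered_ab_group_add option) \<Rightarrow> bool" where
  "is_valuation v \<longleftrightarrow>
     (\<forall>a b. v (a * b) = vadd (v a) (v b)) \<and>
     (\<forall>a b. vle (vmin (v a) (v b)) (v (a + b))) \<and>
     v 1 = Some 0 \<and> v 0 = None"

text \<open>The i-th coefficient f_i of the q-expansion of f (for monic q).\<close>
definition qcoeff :: "'a::field poly \<Rightarrow> 'a poly \<Rightarrow> nat \<Rightarrow> 'a poly" where
  "qcoeff q f i = (f div q ^ i) mod q"

text \<open>q-truncation: minimum of v(f_i q^i) over the expansion (indices beyond the
  expansion length give f_i = 0, hence value \<infinity>, and do not affect the minimum).\<close>
definition truncation :: "('a::field poly \<Rightarrow> 'g::linordered_ab_group_add option) \<Rightarrow> 'a poly \<Rightarrow> 'a poly \<Rightarrow> 'g option" where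
  "truncation v q f = fold (\<lambda>i acc. vmin (v (qcoeff q f i * q ^ i)) acc) [0..<Suc (degree f)] None"

definition Qpow :: "('a::field poly \<Rightarrow> nat) \<Rightarrow> 'a poly" where
  "Qpow lam = (\<Prod>q\<in>{q. lam q \<noteq> 0}. q ^ lam q)"

definition complete_set :: "('a::field poly \<Rightarrow> 'g::linordered_ab_group_add option) \<Rightarrow> 'a poly set \<Rightarrow> bool" where
  "complete_set v Q \<longleftrightarrow>
     (\<forall>p. degree p > 0 \<longrightarrow> (\<exists>q\<in>Q. degree q \<le> degree p \<and> v p = truncation v q p))"

end

theory Submission
  imports Defs
begin

text \<open>Write p = \<Sum> a_i Q^(\<lambda>_i) as in (3). Property (2), applied to the finitely many
  polynomials occurring in the \<lambda>_i, yields one of them, q, with \<nu>_q = \<nu> on all of them.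
  Both \<nu>_q and \<nu> are valuations and agree on constants, so they agree on every monomial
  a_i Q^(\<lambda>_i); hence \<nu>_q(p) \<ge> min_i \<nu>(a_i Q^(\<lambda>_i)) \<ge> \<nu>(p). The reverse inequality
  \<nu>_q \<le> \<nu> holds for every truncation, by the ultrametric inequality applied to the
  q-expansion.\<close>

lemma vle_refl: "vle x x"
  by (cases x) auto

lemma vle_trans: "vle x y \<Longrightarrow> vle y z \<Longrightarrow> vle x z"
  by (cases x; cases y; cases z) auto

lemma vle_antisym: "vle x y \<Longrightarrow> vle y x \<Longrightarrow> x = y"
  by (cases x; cases y) auto

lemma vle_vmin_iff: "vle c (vmin a b) \<longleftrightarrow> vle c a \<and> vle c b"
  by (cases a; cases b; cases c) auto

lemma vmin_mono: "vle a a' \<Longrightarrow> vle b b' \<Longrightarrow> vle (vmin a b) (vmin a' b')"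
  by (cases a; cases b; cases a'; cases b') (auto simp: min_le_iff_disj)

lemma vmin_None_right [simp]: "vmin x None = x"
  by (cases x) auto

lemma valuation_mult: "is_valuation v \<Longrightarrow> v (a * b) = vadd (v a) (v b)"
  unfolding is_valuation_def by blast

lemma valuation_add_ge: "is_valuation v \<Longrightarrow> vle (vmin (v a) (v b)) (v (a + b))"
  unfolding is_valuation_def by blast

lemma valuation_one: "is_valuation v \<Longrightarrow> v 1 = Some 0"
  unfolding is_valuation_def by blast

lemma valuation_zero: "is_valuation v \<Longrightarrow> v 0 = None"
  unfolding is_valuation_def by blast

lemma valuation_sum_ge:
  fixes r :: nat
  assumes "is_valuation v" and "\<forall>i<r. vle c (v (t i))"
  shows "vle c (v (\<Sum>i<r. t i))"
  using assms(2)
proof (induction r)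
  case 0
  then show ?case by (simp add: valuation_zero[OF assms(1)])
next
  case (Suc r)
  then have "vle c (vmin (v (\<Sum>i<r. t i)) (v (t r)))"
    by (simp add: vle_vmin_iff)
  then show ?case
    using valuation_add_ge[OF assms(1)] by (auto intro: vle_trans)
qed

lemma valuation_power_eq:
  assumes "is_valuation v" "is_valuation w" "v x = w x"
  shows "v (x ^ n) = w (x ^ n)"
  using assms by (induction n) (simp_all add: valuation_mult valuation_one)

lemma valuation_prod_power_eq:
  assumes "is_valuation v" "is_valuation w" "finite S" "\<forall>x\<in>S. v x = w x"
  shows "v (\<Prod>x\<in>S. x ^ k x) = w (\<Prod>x\<in>S. x ^ k x)"
  using assms(3,4)
proof (induction S rule: finite_induct)
  case empty
  then show ?case by (simp add: valuation_one assms(1,2))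
next
  case (insert x S)
  then show ?case
    using valuation_power_eq[OF assms(1,2), of x "k x"]
    by (simp add: valuation_mult[OF assms(1)] valuation_mult[OF assms(2)])
qed

lemma valuation_monomial_eq:
  assumes "is_valuation v" "is_valuation w" "v [:c:] = w [:c:]"
    and "finite {x. k x \<noteq> 0}" "\<forall>x. k x \<noteq> 0 \<longrightarrow> v x = w x"
  shows "v (smult c (Qpow k)) = w (smult c (Qpow k))"
proof -
  have "v (Qpow k) = w (Qpow k)"
    unfolding Qpow_def using assms by (intro valuation_prod_power_eq) auto
  moreover have "smult c (Qpow k) = [:c:] * Qpow k"
    by simp
  ultimately show ?thesis
    by (simp only: valuation_mult[OF assms(1)] valuation_mult[OF assms(2)] assms(3))
qed

lemma valuation_eq_of_dominated_sum:
  fixes r :: nat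
  assumes "is_valuation w" "\<And>f. vle (w f) (v f)"
    and "p = (\<Sum>i<r. t i)" "\<forall>i<r. vle (v p) (v (t i))" "\<forall>i<r. w (t i) = v (t i)"
  shows "w p = v p"
proof (rule vle_antisym)
  show "vle (v p) (w p)"
    using assms(3-5) valuation_sum_ge[OF assms(1), of r "v p" t] by simp
qed (rule assms(2))

lemma q_expansion:
  fixes f q :: "'a::field poly"
  shows "f = (\<Sum>i<n. qcoeff q f i * q ^ i) + (f div q ^ n) * q ^ n"
proof (induction n)
  case 0
  then show ?case by simp
next
  case (Suc n)
  have "f div q ^ n = (f div q ^ n div q) * q + (f div q ^ n) mod q"
    by simp
  also have "f div q ^ n div q = f div q ^ Suc n"
    by (simp only: power_Suc2 poly_div_mult_right)
  finally have "f div q ^ n = (f div q ^ Suc n) * q + qcoeff q f n"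
    unfolding qcoeff_def .
  then show ?case
    by (subst Suc.IH) (simp add: algebra_simps power_Suc2)
qed

lemma q_expansion_finite:
  fixes f q :: "'a::field poly"
  assumes "degree q > 0"
  shows "f = (\<Sum>i<Suc (degree f). qcoeff q f i * q ^ i)"
proof -
  have "degree f < Suc (degree f) * 1" by simp
  also have "\<dots> \<le> Suc (degree f) * degree q"
    using assms by (intro mult_le_mono2) simp
  finally have "degree f < Suc (degree f) * degree q" .
  also have "Suc (degree f) * degree q = degree (q ^ Suc (degree f))"
    using assms by (intro degree_power_eq[symmetric]) auto
  finally have "f div q ^ Suc (degree f) = 0"
    by (rule div_poly_less)
  then show ?thesis
    using q_expansion[of f q "Suc (degree f)"] by simp
qed

lemma fold_vmin_le:
  assumes "is_valuation v" and "vle acc (v z)"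
  shows "vle (fold (\<lambda>i acc. vmin (v (h i)) acc) xs acc) (v (sum_list (map h xs) + z))"
  using assms(2)
proof (induction xs arbitrary: acc z)
  case Nil
  then show ?case by simp
next
  case (Cons x xs)
  have "vle (vmin (v (h x)) acc) (v (h x + z))"
    using vmin_mono[OF vle_refl Cons.prems] valuation_add_ge[OF assms(1)] by (rule vle_trans)
  from Cons.IH[OF this] show ?case
    by (simp add: algebra_simps)
qed

lemma truncation_le:
  fixes q :: "'a::field poly"
  assumes "is_valuation v" "degree q > 0"
  shows "vle (truncation v q f) (v f)"
proof -
  let ?t = "\<lambda>i. qcoeff q f i * q ^ i"
  have "vle (truncation v q f) (v (sum_list (map ?t [0..<Suc (degree f)]) + 0))"
    unfolding truncation_def
    by (intro fold_vmin_le) (simp_all add: assms(1) valuation_zero)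
  also have "sum_list (map ?t [0..<Suc (degree f)]) + 0 = f"
    using q_expansion_finite[OF assms(2), of f]
    by (simp only: add_0_right atLeast0LessThan set_upt
        flip: sum_set_upt_conv_sum_list_nat)
  finally show ?thesis .
qed

lemma truncation_const:
  fixes q :: "'a::field poly"
  assumes "degree q > 0"
  shows "truncation v q [:c:] = v [:c:]"
  using assms by (simp add: truncation_def qcoeff_def mod_poly_less)

lemma sum_smult_Qpow_nonconstant_imp_support:
  fixes r :: nat and a :: "nat \<Rightarrow> 'a::field"
  assumes "degree (\<Sum>i<r. smult (a i) (Qpow (lam i))) > 0"
  shows "\<exists>i<r. \<exists>x. lam i x \<noteq> 0"
proof (rule ccontr)
  assume "\<not> ?thesis"
  then have "(\<Sum>i<r. smult (a i) (Qpow (lam i))) = [:\<Sum>i<r. a i:]"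
    by (induction r) (auto simp: Qpow_def)
  with assms show False by simp
qed

lemma truncation_eq_at_dominated_representation:
  fixes r :: nat and q :: "'a::field poly"
  assumes "is_valuation v" "is_valuation (truncation v q)" "degree q > 0"
    and "p = (\<Sum>i<r. smult (a i) (Qpow (lam i)))"
    and "\<forall>i<r. vle (v p) (v (smult (a i) (Qpow (lam i))))"
    and "\<forall>i<r. finite {x. lam i x \<noteq> 0}"
    and "\<forall>i<r. \<forall>x. lam i x \<noteq> 0 \<longrightarrow> truncation v q x = v x"
  shows "truncation v q p = v p"
proof (rule valuation_eq_of_dominated_sum[OF assms(2) _ assms(4,5)])
  show "vle (truncation v q f) (v f)" for f
    by (rule truncation_le[OF assms(1,3)])
  show "\<forall>i<r. truncation v q (smult (a i) (Qpow (lam i))) = v (smult (a i) (Qpow (lam i)))"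
    using assms(6,7)
    by (auto intro!: valuation_monomial_eq[OF assms(2,1) truncation_const[OF assms(3)]]
        simp del: vle.simps vmin.simps)
qed

theorem mainTheorem2:
  fixes v :: "'a::field poly \<Rightarrow> 'g::linordered_ab_group_add option"
    and Q :: "'a poly set"
  assumes val: "is_valuation v"
    and monic_nonconst: "\<forall>q\<in>Q. lead_coeff q = 1 \<and> degree q > 0"
    and h1: "\<forall>q\<in>Q. is_valuation (truncation v q)"
    and h2: "\<forall>F. finite F \<and> F \<noteq> {} \<and> F \<subseteq> Q \<longrightarrow>
               (\<exists>q\<in>F. \<forall>q'\<in>F. truncation v q q' = v q')"
    and h3: "\<forall>p. \<exists>(r::nat) (a::nat \<Rightarrow> 'a) (lam::nat \<Rightarrow> 'a poly \<Rightarrow> nat).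
               (\<forall>i<r. finite {q. lam i q \<noteq> 0} \<and> {q. lam i q \<noteq> 0} \<subseteq> Q) \<and>
               p = (\<Sum>i<r. smult (a i) (Qpow (lam i))) \<and>
               (\<forall>i<r. vle (v p) (v (smult (a i) (Qpow (lam i))))) \<and>
               (\<forall>q\<in>Q. (\<exists>i<r. lam i q \<noteq> 0) \<longrightarrow> degree q \<le> degree p)"
  shows "complete_set v Q"
  unfolding complete_set_def
proof (intro allI impI)
  fix p :: "'a poly"
  assume "degree p > 0"
  obtain r :: nat and a lam
    where supp: "\<forall>i<r. finite {q. lam i q \<noteq> 0} \<and> {q. lam i q \<noteq> 0} \<subseteq> Q"
    and p: "p = (\<Sum>i<r. smult (a i) (Qpow (lam i)))"
    and dominated: "\<forall>i<r. vle (v p) (v (smult (a i) (Qpow (lam i))))"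
    and deg: "\<forall>q\<in>Q. (\<exists>i<r. lam i q \<noteq> 0) \<longrightarrow> degree q \<le> degree p"
    using h3 by blast
  define F where "F = (\<Union>i<r. {q. lam i q \<noteq> 0})"
  have "F \<noteq> {}"
    using sum_smult_Qpow_nonconstant_imp_support[where r = r and a = a and lam = lam]
      \<open>degree p > 0\<close> p
    by (auto simp: F_def)
  moreover have "finite F" "F \<subseteq> Q"
    using supp by (auto simp: F_def)
  ultimately obtain q where "q \<in> F" and agree: "\<forall>q'\<in>F. truncation v q q' = v q'"
    using h2 by blast
  then have "q \<in> Q"
    using \<open>F \<subseteq> Q\<close> by blast
  moreover have "\<exists>i<r. lam i q \<noteq> 0"
    using \<open>q \<in> F\<close> by (auto simp: F_def)
  ultimately have "degree q > 0" "degree q \<le> degree p"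
    using monic_nonconst deg by simp_all
  have "truncation v q p = v p"
    using truncation_eq_at_dominated_representation[OF val _ \<open>degree q > 0\<close> p dominated]
      h1 \<open>q \<in> Q\<close> supp agree by (auto simp: F_def)
  then show "\<exists>q\<in>Q. degree q \<le> degree p \<and> v p = truncation v q p"
    using \<open>q \<in> Q\<close> \<open>degree q \<le> degree p\<close> by auto
qed

end
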